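(* Let $p$ be a prime, let $n\geq p^2$ and let $D\subseteq\mathbb{F}_p^n$ be a set of size $|D|<\binom{n+p-2}{p-1}$. Then there exist disjoint sets $T_1,T_2\subseteq\mathbb{F}_p^n$ such that the $p$-dimensional rectangle $T_1\times T_2\times\cdots\times T_2$ contains at least $p^{2n+p-p^2}$ lines, but no lines with direction in $D$.
   Context: The line through $x\in\mathbb{F}_p^n$ in direction $d\in\mathbb{F}_p^n$ is the sequence $\ell_{x,d}=(x+\lambda d)_{\lambda\in\mathbb{F}_p}$ (lines are counted as pairs $(x,d)$). A rectangle $T_1\times\cdots\times T_p$ with $T_i\subseteq\mathbb{F}_p^n$ contains $\ell_{x,d}$ if $x+\lambda d\in T_{\lambda+1}$ for every $\lambda\in\{0,1,\dots,p-1\}$. *)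

theory Defs
  imports "HOL-Computational_Algebra.Primes"
begin

text \<open>F_p^n is modelled as functions nat => nat with coordinates in {0..<p}
  for indices i < n and 0 for indices i >= n.\<close>

definition vecs :: "nat \<Rightarrow> nat \<Rightarrow> (nat \<Rightarrow> nat) set" where
  "vecs p n = {x. \<forall>i. (i < n \<longrightarrow> x i < p) \<and> (n \<le> i \<longrightarrow> x i = 0)}"

definition line_pt :: "nat \<Rightarrow> (nat \<Rightarrow> nat) \<Rightarrow> (nat \<Rightarrow> nat) \<Rightarrow> nat \<Rightarrow> (nat \<Rightarrow> nat)" where
  "line_pt p x d l = (\<lambda>i. (x i + l * d i) mod p)"

text \<open>The rectangle T 1 x T 2 x ... x T p contains the line (x,d) iff
  x + l*d is in T (l+1) for every l in {0..p-1}.\<close>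
definition rect_contains :: "nat \<Rightarrow> (nat \<Rightarrow> (nat \<Rightarrow> nat) set) \<Rightarrow> (nat \<Rightarrow> nat) \<Rightarrow> (nat \<Rightarrow> nat) \<Rightarrow> bool" where
  "rect_contains p T x d = (\<forall>l<p. line_pt p x d l \<in> T (l + 1))"

definition num_lines :: "nat \<Rightarrow> nat \<Rightarrow> (nat \<Rightarrow> (nat \<Rightarrow> nat) set) \<Rightarrow> nat" where
  "num_lines p n T = card {(x, d). x \<in> vecs p n \<and> d \<in> vecs p n \<and> rect_contains p T x d}"

end

(*
  Pick a form g of degree p - 1 that vanishes modulo p on D but has a coefficient not divisible
  by p; this is possible because D has fewer points than there are monomials of degree p - 1.
  Such a reduced form does not vanish on the whole grid, say g d0 is nonzero mod p, and we put
  P = g - g d0, T1 = {P nonzero} and T2 = {P zero} (modulo p).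

  For a polynomial of degree at most p - 1 the sum of its values along a line depends only on
  the direction d, since only the coefficient of l^(p-1) survives summation over l. For P and
  d in D this sum is g d * (sum of l^(p-1)) - p * g d0 = 0 mod p, whereas along a line of the
  rectangle it is P x, which is nonzero: so no line with direction in D lies in the rectangle.

  The line through 0 in direction d0 does lie in it, by homogeneity of g and Fermat's little
  theorem. With Fermat again, the lines of the rectangle are the nonzeros on the grid of
  dimension 2n of a single polynomial of degree p(p-1)^2, so the Alon-Furedi bound yields at
  least p^(2n - p(p-1)) of them.
*)
theory Submission
  imports Defs "HOL-Number_Theory.Number_Theory" "HOL-Computational_Algebra.Polynomial" "HOL-Library.Multiset"
begin

section \<open>Power sums and Fermat's little theorem modulo p\<close>

lemma prime_dvd_power_sum:
  assumes p: "prime p" and j: "j < p - 1"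
  shows "int p dvd (\<Sum>t<p. int t ^ j)"
proof -
  have "p dvd (\<Sum>t<p. t ^ j)"
  proof (cases "j = 0")
    case False
    obtain a where a: "a \<in> totatives p" "ord p a = p - 1"
      using residue_prime_has_primroot[OF p] by blast
    have cop: "coprime a p" using a(1) by (simp add: in_totatives_iff)
    have "\<not> [a ^ j = 1] (mod p)"
      using a(2) j False by (auto simp: ord_divides' dest: dvd_imp_le)
    have "inj_on (\<lambda>t. a * t mod p) {..<p}"
    proof (rule inj_onI)
      fix s t assume "s \<in> {..<p}" "t \<in> {..<p}" "a * s mod p = a * t mod p"
      then have "[a * s = a * t] (mod p)" by (simp add: cong_def)
      then have "[s = t] (mod p)" using cop by (simp add: cong_mult_lcancel_nat coprime_commute)
      then show "s = t" using \<open>s \<in> {..<p}\<close> \<open>t \<in> {..<p}\<close> by (simp add: cong_def)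
    qed
    then have perm: "(\<lambda>t. a * t mod p) ` {..<p} = {..<p}"
      by (intro endo_inj_surj) (use prime_gt_0_nat[OF p] in auto)
    have "(\<Sum>t<p. t ^ j) = (\<Sum>t<p. (a * t mod p) ^ j)"
      using sum.reindex[OF \<open>inj_on _ _\<close>, of "\<lambda>t. t ^ j"] perm by simp
    also have "[\<dots> = (\<Sum>t<p. (a * t) ^ j)] (mod p)"
      by (intro cong_sum cong_pow) (simp add: cong_def)
    also have "(\<Sum>t<p. (a * t) ^ j) = a ^ j * (\<Sum>t<p. t ^ j)"
      by (simp add: power_mult_distrib sum_distrib_left)
    finally have "[1 * (\<Sum>t<p. t ^ j) = a ^ j * (\<Sum>t<p. t ^ j)] (mod p)" by simp
    show ?thesis
    proof (rule ccontr)
      assume "\<not> p dvd (\<Sum>t<p. t ^ j)"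
      then have "coprime (\<Sum>t<p. t ^ j) p" using p by (simp add: prime_imp_coprime coprime_commute)
      then have "[1 = a ^ j] (mod p)"
        using \<open>[1 * _ = _] (mod p)\<close> cong_mult_rcancel_nat by blast
      then show False using \<open>\<not> [a ^ j = 1] (mod p)\<close> by (simp add: cong_sym_eq)
    qed
  qed simp
  moreover have "(\<Sum>t<p. int t ^ j) = int (\<Sum>t<p. t ^ j)" by simp
  ultimately show ?thesis by (simp only: int_dvd_int_iff)
qed

lemma prime_not_dvd_power_sum_pred:
  assumes p: "prime p"
  shows "\<not> int p dvd (\<Sum>t<p. int t ^ (p - 1))"
proof -
  have p1: "p > 1" using prime_gt_1_nat[OF p] .
  have "[(\<Sum>t<p. t ^ (p - 1)) = (\<Sum>t<p. if t = 0 then 0 else 1)] (mod p)"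
  proof (rule cong_sum)
    fix t assume "t \<in> {..<p}"
    then show "[t ^ (p - 1) = (if t = 0 then 0 else 1)] (mod p)"
    proof (cases "t = 0")
      case False
      then have "\<not> p dvd t" using \<open>t \<in> {..<p}\<close> by (auto dest: dvd_imp_le)
      then show ?thesis using fermat_theorem[OF p] False by simp
    qed (use p1 in \<open>simp add: zero_power\<close>)
  qed
  also have "(\<Sum>t<p. if t = 0 then 0 else 1 :: nat) = p - 1"
  proof -
    have "{..<p} \<inter> - {t. t = 0} = {..<p} - {0}" by auto
    then show ?thesis using p1 by (simp add: sum.If_cases)
  qed
  finally have "\<not> p dvd (\<Sum>t<p. t ^ (p - 1))"
    using p1 by (auto simp: cong_def dvd_eq_mod_eq_0)
  moreover have "(\<Sum>t<p. int t ^ (p - 1)) = int (\<Sum>t<p. t ^ (p - 1))" by simp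
  ultimately show ?thesis by (metis int_dvd_int_iff)
qed

lemma fermat_theorem_int:
  assumes p: "prime p" and a: "\<not> int p dvd a"
  shows "int p dvd a ^ (p - 1) - 1"
proof -
  have "\<not> p dvd nat (a mod int p)"
    using a prime_gt_0_nat[OF p]
    by (metis dvd_eq_mod_eq_0 mod_mod_trivial nat_0_le of_nat_0_less_iff pos_mod_sign int_dvd_int_iff)
  then have "[nat (a mod int p) ^ (p - 1) = 1] (mod p)" by (rule fermat_theorem[OF p])
  then have "[(a mod int p) ^ (p - 1) = 1] (mod int p)"
    using prime_gt_0_nat[OF p] by (metis cong_int_iff of_nat_1 of_nat_power pos_mod_sign of_nat_0_less_iff int_nat_eq)
  then have "[a ^ (p - 1) = 1] (mod int p)"
  proof -
    have "[a = a mod int p] (mod int p)" by (simp add: cong_def)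
    then show ?thesis using \<open>[(a mod int p) ^ (p - 1) = 1] (mod int p)\<close> cong_pow cong_trans by blast
  qed
  then show ?thesis by (simp add: cong_iff_dvd_diff)
qed

lemma prime_dvd_one_minus_power_pred_iff:
  assumes "prime p"
  shows "int p dvd 1 - a ^ (p - 1) \<longleftrightarrow> \<not> int p dvd a"
proof
  assume "int p dvd 1 - a ^ (p - 1)"
  moreover have "\<not> int p dvd 1" using prime_gt_1_nat[OF assms] by simp
  ultimately show "\<not> int p dvd a"
    using prime_gt_1_nat[OF assms]
    by (metis dvd_power dvd_trans dvd_add_right_iff diff_add_cancel zero_less_diff)
next
  assume "\<not> int p dvd a"
  then show "int p dvd 1 - a ^ (p - 1)"
    using fermat_theorem_int[OF assms] by (metis dvd_minus_iff minus_diff_eq)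
qed

section \<open>The grid\<close>

lemma vecs_finite: "finite (vecs p n)"
proof -
  have "vecs p n = {f. \<forall>x. (x \<in> {..<n} \<longrightarrow> f x \<in> {..<p}) \<and> (x \<notin> {..<n} \<longrightarrow> f x = 0)}"
    unfolding vecs_def by auto
  then show ?thesis using finite_set_of_finite_funs[of "{..<n}" "{..<p}" 0] by simp
qed

lemma vecs_0: "vecs p 0 = {\<lambda>_. 0}"
  unfolding vecs_def by auto

lemma zero_in_vecs: "0 < p \<Longrightarrow> (\<lambda>_. 0) \<in> vecs p n"
  unfolding vecs_def by auto

lemma fun_upd_in_vecs_Suc: "x \<in> vecs p (Suc m) \<Longrightarrow> t < p \<Longrightarrow> x(m := t) \<in> vecs p (Suc m)"
  unfolding vecs_def by auto

lemma line_pt_in_vecs: "x \<in> vecs p n \<Longrightarrow> d \<in> vecs p n \<Longrightarrow> 0 < p \<Longrightarrow> line_pt p x d l \<in> vecs p n"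
  unfolding vecs_def line_pt_def by auto

lemma bij_betw_vecs_Suc:
  "bij_betw (\<lambda>(x, t). x(m := t)) (vecs p m \<times> {..<p}) (vecs p (Suc m))"
proof (rule bij_betw_imageI)
  show "inj_on (\<lambda>(x, t). x(m := t)) (vecs p m \<times> {..<p})"
  proof (rule inj_onI, clarsimp)
    fix x t y s assume "x \<in> vecs p m" "y \<in> vecs p m" and e: "x(m := t) = y(m := s)"
    then have "x m = 0" "y m = 0" unfolding vecs_def by auto
    then have "x = y" using fun_cong[OF e] by (metis fun_upd_apply ext)
    moreover have "t = s" using fun_cong[OF e, of m] by simp
    ultimately show "x = y \<and> t = s" ..
  qed
  show "(\<lambda>(x, t). x(m := t)) ` (vecs p m \<times> {..<p}) = vecs p (Suc m)"
  proof (intro equalityI subsetI)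
    fix y assume y: "y \<in> vecs p (Suc m)"
    then have "y(m := 0) \<in> vecs p m" "y m < p" unfolding vecs_def by auto
    then show "y \<in> (\<lambda>(x, t). x(m := t)) ` (vecs p m \<times> {..<p})"
      by (intro rev_image_eqI[of "(y(m := 0), y m)"]) auto
  qed (auto simp: vecs_def less_Suc_eq)
qed

lemma card_vecs_Suc_Collect:
  "card {x \<in> vecs p (Suc m). Q x} = (\<Sum>t<p. card {x \<in> vecs p m. Q (x(m := t))})"
proof -
  let ?S = "SIGMA x:vecs p m. {t \<in> {..<p}. Q (x(m := t))}"
  have bij: "bij_betw (\<lambda>(x, t). x(m := t)) (vecs p m \<times> {..<p}) (vecs p (Suc m))"
    by (rule bij_betw_vecs_Suc)
  have img: "(\<lambda>(x, t). x(m := t)) ` ?S = {x \<in> vecs p (Suc m). Q x}"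
  proof (intro equalityI subsetI)
    fix y assume "y \<in> (\<lambda>(x, t). x(m := t)) ` ?S"
    then show "y \<in> {x \<in> vecs p (Suc m). Q x}"
      using bij_betw_apply[OF bij] by auto
  next
    fix y assume y: "y \<in> {x \<in> vecs p (Suc m). Q x}"
    then obtain z where "z \<in> vecs p m \<times> {..<p}" "y = (\<lambda>(x, t). x(m := t)) z"
      using bij_betw_imp_surj_on[OF bij] by blast
    then show "y \<in> (\<lambda>(x, t). x(m := t)) ` ?S" using y by auto
  qed
  have "inj_on (\<lambda>(x, t). x(m := t)) ?S"
    by (rule inj_on_subset[OF bij_betw_imp_inj_on[OF bij]]) auto
  from card_image[OF this] have "card {x \<in> vecs p (Suc m). Q x} = card ?S"
    unfolding img .
  also have "\<dots> = (\<Sum>x\<in>vecs p m. card {t \<in> {..<p}. Q (x(m := t))})"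
    by (rule card_SigmaI) (auto simp: vecs_finite)
  also have "\<dots> = (\<Sum>x\<in>vecs p m. \<Sum>t<p. if Q (x(m := t)) then 1 else 0)"
    by (intro sum.cong refl) (simp add: sum.If_cases Int_def)
  also have "\<dots> = (\<Sum>t<p. card {x \<in> vecs p m. Q (x(m := t))})"
    by (subst sum.swap) (simp add: sum.If_cases vecs_finite Int_def)
  finally show ?thesis .
qed

lemma sum_vecs_prod:
  fixes h :: "nat \<Rightarrow> nat \<Rightarrow> int"
  shows "(\<Sum>y\<in>vecs p n. \<Prod>i<n. h i (y i)) = (\<Prod>i<n. \<Sum>t<p. h i t)"
proof (induction n)
  case 0
  then show ?case by (simp add: vecs_0)
next
  case (Suc n)
  have "(\<Sum>y\<in>vecs p (Suc n). \<Prod>i<Suc n. h i (y i))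
      = (\<Sum>z\<in>vecs p n \<times> {..<p}. \<Prod>i<Suc n. h i ((\<lambda>(x, t). x(n := t)) z i))"
    by (rule sum.reindex_bij_betw[OF bij_betw_vecs_Suc[of n p], of "\<lambda>y. \<Prod>i<Suc n. h i (y i)", symmetric])
  also have "\<dots> = (\<Sum>(x, t)\<in>vecs p n \<times> {..<p}. (\<Prod>i<n. h i (x i)) * h n t)"
    by (intro sum.cong refl) (auto simp: case_prod_beta intro!: prod.cong)
  also have "\<dots> = (\<Sum>x\<in>vecs p n. \<Prod>i<n. h i (x i)) * (\<Sum>t<p. h n t)"
    by (simp add: sum.cartesian_product[symmetric] sum_product)
  finally show ?case using Suc.IH by simp
qed

definition vec_fst :: "nat \<Rightarrow> (nat \<Rightarrow> nat) \<Rightarrow> nat \<Rightarrow> nat" where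
  "vec_fst n u = (\<lambda>i. if i < n then u i else 0)"

definition vec_snd :: "nat \<Rightarrow> (nat \<Rightarrow> nat) \<Rightarrow> nat \<Rightarrow> nat" where
  "vec_snd n u = (\<lambda>i. if i < n then u (n + i) else 0)"

lemma bij_betw_vec_fst_snd:
  "bij_betw (\<lambda>u. (vec_fst n u, vec_snd n u)) (vecs p (2 * n)) (vecs p n \<times> vecs p n)"
proof (rule bij_betwI')
  fix u v assume u: "u \<in> vecs p (2 * n)" and v: "v \<in> vecs p (2 * n)"
  show "((vec_fst n u, vec_snd n u) = (vec_fst n v, vec_snd n v)) = (u = v)"
  proof
    assume eq: "(vec_fst n u, vec_snd n u) = (vec_fst n v, vec_snd n v)"
    show "u = v"
    proof
      fix i
      consider "i < n" | "n \<le> i" "i < 2 * n" | "2 * n \<le> i" by linarith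
      then show "u i = v i"
      proof cases
        case 1
        have "vec_fst n u i = vec_fst n v i" using eq by simp
        then show ?thesis using 1 by (simp add: vec_fst_def)
      next
        case 2
        have "vec_snd n u (i - n) = vec_snd n v (i - n)" using eq by simp
        moreover have "i - n < n" using 2 by simp
        ultimately show ?thesis using 2 by (simp add: vec_snd_def)
      next
        case 3
        then show ?thesis using u v unfolding vecs_def by auto
      qed
    qed
  qed simp
next
  fix u assume "u \<in> vecs p (2 * n)"
  then show "(vec_fst n u, vec_snd n u) \<in> vecs p n \<times> vecs p n"
    unfolding vecs_def vec_fst_def vec_snd_def by auto
next
  fix z assume "z \<in> vecs p n \<times> vecs p n"
  then obtain x d where z: "z = (x, d)" "x \<in> vecs p n" "d \<in> vecs p n" by blast
  define u where "u i = (if i < n then x i else if i < 2 * n then d (i - n) else 0)" for i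
  have "u \<in> vecs p (2 * n)" using z unfolding u_def vecs_def by auto
  moreover have "vec_fst n u = x" "vec_snd n u = d"
    using z unfolding u_def vec_fst_def vec_snd_def vecs_def by auto
  ultimately show "\<exists>u\<in>vecs p (2 * n). z = (vec_fst n u, vec_snd n u)" using z by auto
qed

section \<open>Polynomial functions\<close>

text \<open>Multivariate polynomials are represented by the functions they define on coordinate
  vectors: polyfun k f says that f is an integer polynomial of total degree at most k.\<close>

inductive polyfun :: "nat \<Rightarrow> ((nat \<Rightarrow> nat) \<Rightarrow> int) \<Rightarrow> bool" where
  polyfun_const: "polyfun k (\<lambda>_. c)"
| polyfun_add: "polyfun k f \<Longrightarrow> polyfun k g \<Longrightarrow> polyfun k (\<lambda>x. f x + g x)"
| polyfun_smult: "polyfun k f \<Longrightarrow> polyfun k (\<lambda>x. c * f x)"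
| polyfun_coord_mult: "polyfun k f \<Longrightarrow> polyfun (Suc k) (\<lambda>x. int (x i) * f x)"

lemma polyfun_Suc: "polyfun k f \<Longrightarrow> polyfun (Suc k) f"
  by (induction rule: polyfun.induct) (auto intro: polyfun.intros)

lemma polyfun_mono:
  assumes "polyfun k f" "k \<le> k'"
  shows "polyfun k' f"
  using assms(2,1) by (induction k' rule: dec_induct) (auto intro: polyfun_Suc)

lemma polyfun_coord: "polyfun 1 (\<lambda>x. int (x i))"
  using polyfun_coord_mult[OF polyfun_const[of 0 1], of i] by simp

lemma polyfun_diff: "polyfun k f \<Longrightarrow> polyfun k g \<Longrightarrow> polyfun k (\<lambda>x. f x - g x)"
  using polyfun_add[OF _ polyfun_smult[of k g "-1"], of f] by simp

lemma polyfun_mult: "polyfun a f \<Longrightarrow> polyfun b g \<Longrightarrow> polyfun (a + b) (\<lambda>x. f x * g x)"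
proof (induction rule: polyfun.induct)
  case (polyfun_const k c)
  then show ?case using polyfun_mono[OF polyfun_smult] by simp
next
  case (polyfun_add k f h)
  then show ?case using polyfun.polyfun_add by (simp add: distrib_right)
next
  case (polyfun_smult k f c)
  then show ?case using polyfun.polyfun_smult[of _ _ c] by (simp add: mult.assoc)
next
  case (polyfun_coord_mult k f i)
  then show ?case using polyfun.polyfun_coord_mult[of _ _ i] by (simp add: mult.assoc)
qed

lemma polyfun_sum:
  "finite I \<Longrightarrow> (\<And>i. i \<in> I \<Longrightarrow> polyfun k (f i)) \<Longrightarrow> polyfun k (\<lambda>x. \<Sum>i\<in>I. f i x)"
  by (induction I rule: finite_induct) (auto intro: polyfun.intros)

lemma polyfun_prod:
  "finite I \<Longrightarrow> (\<And>i. i \<in> I \<Longrightarrow> polyfun (k i) (f i)) \<Longrightarrow>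
     polyfun (\<Sum>i\<in>I. k i) (\<lambda>x. \<Prod>i\<in>I. f i x)"
  by (induction I rule: finite_induct) (auto intro: polyfun_const polyfun_mult)

lemma polyfun_power: "polyfun k f \<Longrightarrow> polyfun (m * k) (\<lambda>x. f x ^ m)"
  by (induction m) (auto intro: polyfun_const dest: polyfun_mult)

lemma polyfun_compose:
  "polyfun k f \<Longrightarrow> (\<And>i. polyfun 1 (\<lambda>u. int (\<sigma> u i))) \<Longrightarrow> polyfun k (\<lambda>u. f (\<sigma> u))"
proof (induction rule: polyfun.induct)
  case (polyfun_coord_mult k f i)
  then show ?case using polyfun_mult[of 1 "\<lambda>u. int (\<sigma> u i)"] by simp
qed (auto intro: polyfun.intros)

lemma polyfun_fun_upd:
  assumes "polyfun k f"
  shows "polyfun k (\<lambda>x. f (x(j := b)))"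
proof -
  have "polyfun 1 (\<lambda>x. int ((x(j := b)) i))" for i
    using polyfun_coord[of i] by (cases "i = j") (simp_all add: polyfun_const)
  then show ?thesis by (rule polyfun_compose[OF assms, where \<sigma> = "\<lambda>x. x(j := b)"])
qed

lemma polyfun_0_imp_const: "polyfun 0 f \<Longrightarrow> \<exists>c. f = (\<lambda>_. c)"
  by (induction "0::nat" f rule: polyfun.induct) auto

lemma polyfun_cong:
  "polyfun k f \<Longrightarrow> (\<And>i. [x i = y i] (mod p)) \<Longrightarrow> [f x = f y] (mod int p)"
  by (induction rule: polyfun.induct) (auto intro: cong_add cong_mult simp: cong_int_iff)

lemma polyfun_Suc_factor_coord:
  "polyfun (Suc k) f \<Longrightarrow>
     \<exists>q. polyfun k q \<and> (\<forall>x. f x = (int (x j) - int b) * q x + f (x(j := b)))"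
proof (induction "Suc k" f arbitrary: k rule: polyfun.induct)
  case (polyfun_const c k)
  show ?case by (auto intro: polyfun.polyfun_const)
next
  case (polyfun_add f g k)
  then obtain q r where "polyfun k q" "polyfun k r"
    and q: "\<forall>x. f x = (int (x j) - int b) * q x + f (x(j := b))"
    and r: "\<forall>x. g x = (int (x j) - int b) * r x + g (x(j := b))" by blast
  moreover have "f x + g x = (int (x j) - int b) * (q x + r x) + (f (x(j := b)) + g (x(j := b)))" for x
    using q[rule_format, of x] r[rule_format, of x] unfolding distrib_left by linarith
  ultimately show ?case by (blast intro: polyfun.polyfun_add)
next
  case (polyfun_smult f c k)
  then obtain q where "polyfun k q" and q: "\<forall>x. f x = (int (x j) - int b) * q x + f (x(j := b))"
    by blast
  moreover have "c * f x = (int (x j) - int b) * (c * q x) + c * f (x(j := b))" for x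
    using arg_cong[where f = "(*) c", OF q[rule_format, of x]] by (simp add: algebra_simps)
  ultimately show ?case by (blast intro: polyfun.polyfun_smult)
next
  case (polyfun_coord_mult k f i)
  show ?case
  proof (cases k)
    case 0
    then obtain c where "f = (\<lambda>_. c)" using polyfun_0_imp_const polyfun_coord_mult(1) by blast
    then show ?thesis
      by (intro exI[of _ "\<lambda>_. if i = j then c else 0"]) (auto intro: polyfun_const simp: algebra_simps)
  next
    case (Suc k')
    then obtain q where q: "polyfun k' q" "\<forall>x. f x = (int (x j) - int b) * q x + f (x(j := b))"
      using polyfun_coord_mult.hyps(2) by blast
    have "polyfun k (\<lambda>x. int (x i) * q x + (if i = j then f (x(j := b)) else 0))"
      using polyfun_add[OF polyfun.polyfun_coord_mult[OF q(1)]] polyfun.polyfun_coord_mult[OF q(1)]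
        polyfun_fun_upd polyfun_coord_mult(1)
        polyfun_const Suc by (cases "i = j") auto
    moreover have "int (x i) * f x = (int (x j) - int b) * (int (x i) * q x + (if i = j then f (x(j := b)) else 0))
        + int ((x(j := b)) i) * f (x(j := b))" for x
      unfolding q(2)[rule_format, of x] by (cases "i = j") (simp_all add: algebra_simps)
    ultimately show ?thesis by blast
  qed
qed

lemma polyfun_on_line:
  assumes "polyfun k f"
  shows "\<exists>c. \<forall>x. \<exists>P. degree P \<le> k \<and> coeff P k = c \<and> (\<forall>l. f (\<lambda>i. x i + l * d i) = poly P (int l))"
  using assms
proof (induction rule: polyfun.induct)
  case (polyfun_const k c)
  show ?case by (intro exI[of _ "coeff [:c:] k"] allI exI[of _ "[:c:]"]) auto
next
  case (polyfun_add k f g)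
  then obtain c1 c2 where
    "\<forall>x. \<exists>P. degree P \<le> k \<and> coeff P k = c1 \<and> (\<forall>l. f (\<lambda>i. x i + l * d i) = poly P (int l))"
    "\<forall>x. \<exists>P. degree P \<le> k \<and> coeff P k = c2 \<and> (\<forall>l. g (\<lambda>i. x i + l * d i) = poly P (int l))"
    by blast
  then show ?case
    by (intro exI[of _ "c1 + c2"]) (metis coeff_add degree_add_le poly_add)
next
  case (polyfun_smult k f c)
  then obtain c1 where
    "\<forall>x. \<exists>P. degree P \<le> k \<and> coeff P k = c1 \<and> (\<forall>l. f (\<lambda>i. x i + l * d i) = poly P (int l))"
    by blast
  then show ?case
    by (intro exI[of _ "c * c1"]) (metis coeff_smult degree_smult_le order.trans poly_smult)
next
  case (polyfun_coord_mult k f i)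
  then obtain c1 where c1:
    "\<forall>x. \<exists>P. degree P \<le> k \<and> coeff P k = c1 \<and> (\<forall>l. f (\<lambda>i. x i + l * d i) = poly P (int l))"
    by blast
  have "\<exists>Q. degree Q \<le> Suc k \<and> coeff Q (Suc k) = int (d i) * c1 \<and>
      (\<forall>l. int (x i + l * d i) * f (\<lambda>i. x i + l * d i) = poly Q (int l))" for x
  proof -
    obtain P where P: "degree P \<le> k" "coeff P k = c1" "\<forall>l. f (\<lambda>i. x i + l * d i) = poly P (int l)"
      using c1 by blast
    have "degree ([:int (x i), int (d i):] * P) \<le> degree [:int (x i), int (d i):] + degree P"
      by (rule degree_mult_le)
    also have "\<dots> \<le> Suc k" using P(1) by simp
    finally have "degree ([:int (x i), int (d i):] * P) \<le> Suc k" .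
    moreover have "coeff ([:int (x i), int (d i):] * P) (Suc k) = int (d i) * c1"
      using P(1,2) by (simp add: coeff_eq_0)
    moreover have "int (x i + l * d i) * f (\<lambda>i. x i + l * d i) = poly ([:int (x i), int (d i):] * P) (int l)" for l
      using P(3) by (simp add: algebra_simps)
    ultimately show ?thesis by blast
  qed
  then show ?case by blast
qed

section \<open>Sums along lines\<close>

lemma power_sum_poly_cong:
  assumes p: "prime p" and deg: "degree P \<le> p - 1"
  shows "[(\<Sum>l<p. poly P (int l)) = coeff P (p - 1) * (\<Sum>l<p. int l ^ (p - 1))] (mod int p)"
proof -
  obtain m where m: "p - 1 = Suc m" using prime_gt_1_nat[OF p] by (metis Suc_diff_Suc)
  have "(\<Sum>l<p. poly P (int l)) = (\<Sum>l<p. \<Sum>j\<le>p - 1. coeff P j * int l ^ j)"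
    by (subst (1) poly_as_sum_of_monoms'[OF deg, symmetric]) (simp add: poly_sum poly_monom)
  also have "\<dots> = (\<Sum>j\<le>p - 1. coeff P j * (\<Sum>l<p. int l ^ j))"
    by (subst sum.swap) (simp add: sum_distrib_left)
  also have "\<dots> = (\<Sum>j<p - 1. coeff P j * (\<Sum>l<p. int l ^ j))
      + coeff P (p - 1) * (\<Sum>l<p. int l ^ (p - 1))"
    unfolding m by (simp add: lessThan_Suc_atMost[symmetric])
  also have "[\<dots> = 0 + coeff P (p - 1) * (\<Sum>l<p. int l ^ (p - 1))] (mod int p)"
    by (intro cong_add cong_refl) (auto simp: cong_0_iff intro!: dvd_sum dvd_mult prime_dvd_power_sum[OF p])
  finally show ?thesis by simp
qed

lemma polyfun_line_sum_cong:
  assumes p: "prime p" and f: "polyfun (p - 1) f"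
  shows "[(\<Sum>l<p. f (\<lambda>i. x i + l * d i)) = (\<Sum>l<p. f (\<lambda>i. l * d i))] (mod int p)"
proof -
  obtain c where c: "\<And>x. \<exists>P. degree P \<le> p - 1 \<and> coeff P (p - 1) = c \<and>
      (\<forall>l. f (\<lambda>i. x i + l * d i) = poly P (int l))"
    using polyfun_on_line[OF f, of d] by blast
  have line: "[(\<Sum>l<p. f (\<lambda>i. x i + l * d i)) = c * (\<Sum>l<p. int l ^ (p - 1))] (mod int p)" for x
  proof -
    obtain P where P: "degree P \<le> p - 1" "coeff P (p - 1) = c"
      "\<forall>l. f (\<lambda>i. x i + l * d i) = poly P (int l)"
      using c by blast
    then show ?thesis using power_sum_poly_cong[OF p P(1)] by simp
  qed
  show ?thesis using cong_trans[OF line[of x] cong_sym[OF line[of "\<lambda>_. 0"]]] by simp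
qed

section \<open>A weak form of the Alon-Furedi theorem\<close>

lemma int_dvd_diff_less_imp_eq:
  assumes "b < p" "t < p" "int p dvd int b - int t"
  shows "b = t"
proof -
  have "[b = t] (mod p)" using assms(3) by (simp add: cong_iff_dvd_diff[symmetric] cong_int_iff)
  then show ?thesis using assms(1,2) by (simp add: cong_def)
qed

lemma prime_not_dvd_prod_diff:
  assumes "prime p" "finite B" "B \<subseteq> {..<p}" "b < p" "b \<notin> B"
  shows "\<not> int p dvd (\<Prod>t\<in>B. int b - int t)"
  using assms int_dvd_diff_less_imp_eq[of b p] by (auto simp: prime_dvd_prod_iff)

lemma dvd_iff_off_hyperplanes:
  assumes p: "prime p" and B: "finite B" "B \<subseteq> {..<p}"
    and fq: "\<forall>x\<in>vecs p (Suc m). [f x = (\<Prod>t\<in>B. int (x m) - int t) * q x] (mod int p)"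
    and y: "y \<in> vecs p (Suc m)" "y m \<notin> B"
  shows "int p dvd f y \<longleftrightarrow> int p dvd q y"
proof -
  have "\<not> int p dvd (\<Prod>t\<in>B. int (y m) - int t)"
    using prime_not_dvd_prod_diff[OF p B] y unfolding vecs_def by auto
  moreover have "int p dvd f y \<longleftrightarrow> int p dvd (\<Prod>t\<in>B. int (y m) - int t) * q y"
    using cong_dvd_iff[OF fq[rule_format, OF y(1)]] .
  ultimately show ?thesis using p by (simp add: prime_dvd_mult_iff)
qed

lemma polyfun_Suc_factor_hyperplane:
  assumes q: "polyfun (Suc k) q" and b: "b < p"
    and van: "\<forall>x\<in>vecs p (Suc m). x m = b \<longrightarrow> int p dvd q x"
  shows "\<exists>q'. polyfun k q' \<and> (\<forall>x\<in>vecs p (Suc m). [q x = (int (x m) - int b) * q' x] (mod int p))"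
proof -
  obtain q' where "polyfun k q'" and q': "\<forall>x. q x = (int (x m) - int b) * q' x + q (x(m := b))"
    using polyfun_Suc_factor_coord[OF q] by blast
  moreover have "[q x = (int (x m) - int b) * q' x] (mod int p)" if "x \<in> vecs p (Suc m)" for x
  proof -
    have "int p dvd q (x(m := b))" using van fun_upd_in_vecs_Suc[OF that b] by simp
    then show ?thesis using q'[rule_format, of x] by (simp add: cong_add_lcancel_0 cong_0_iff)
  qed
  ultimately show ?thesis by blast
qed

lemma polyfun_factor_hyperplanes:
  assumes p: "prime p" and f: "polyfun k f" and B: "finite B" "B \<subseteq> {..<p}"
    and van: "\<forall>x\<in>vecs p (Suc m). x m \<in> B \<longrightarrow> int p dvd f x"
    and nz: "\<exists>x\<in>vecs p (Suc m). \<not> int p dvd f x"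
  shows "card B \<le> k \<and> (\<exists>q. polyfun (k - card B) q \<and>
    (\<forall>x\<in>vecs p (Suc m). [f x = (\<Prod>t\<in>B. int (x m) - int t) * q x] (mod int p)))"
  using B van
proof (induction B rule: finite_induct)
  case empty
  then show ?case using f by auto
next
  case (insert b B)
  then have b: "b < p" and IH: "card B \<le> k" and "\<exists>q. polyfun (k - card B) q \<and>
    (\<forall>x\<in>vecs p (Suc m). [f x = (\<Prod>t\<in>B. int (x m) - int t) * q x] (mod int p))"
    by auto
  then obtain q where q: "polyfun (k - card B) q"
    and fq: "\<forall>x\<in>vecs p (Suc m). [f x = (\<Prod>t\<in>B. int (x m) - int t) * q x] (mod int p)"
    by blast
  have q_van: "\<forall>x\<in>vecs p (Suc m). x m = b \<longrightarrow> int p dvd q x"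
    using dvd_iff_off_hyperplanes[OF p insert(1) _ fq] insert by auto
  show ?case
  proof (cases "k - card B")
    case 0
    then obtain c where "q = (\<lambda>_. c)" using polyfun_0_imp_const q by auto
    moreover have "(\<lambda>_. 0)(m := b) \<in> vecs p (Suc m)" using b unfolding vecs_def by auto
    ultimately have "int p dvd c" using q_van by fastforce
    then have "\<forall>x\<in>vecs p (Suc m). int p dvd f x"
      using fq \<open>q = (\<lambda>_. c)\<close> by (auto simp: cong_dvd_iff)
    then show ?thesis using nz by blast
  next
    case (Suc k')
    then obtain q' where "polyfun k' q'"
      and q': "\<forall>x\<in>vecs p (Suc m). [q x = (int (x m) - int b) * q' x] (mod int p)"
      using polyfun_Suc_factor_hyperplane[of k' q b p m] q b q_van by auto
    have "[f x = (\<Prod>t\<in>insert b B. int (x m) - int t) * q' x] (mod int p)"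
      if "x \<in> vecs p (Suc m)" for x
      using cong_trans[OF fq[rule_format, OF that] cong_mult[OF cong_refl q'[rule_format, OF that]]]
        insert.hyps by (simp add: ac_simps)
    moreover have "card (insert b B) \<le> k" "k - card (insert b B) = k'"
      using Suc insert.hyps by auto
    ultimately show ?thesis using \<open>polyfun k' q'\<close> by auto
  qed
qed

lemma Suc_power_pred_le:
  assumes "1 \<le> y" "y \<le> q"
  shows "(q + 1) ^ (y - 1) \<le> y * q ^ (y - 1)"
proof (cases "y \<le> 2")
  case True
  then consider "y = 1" | "y = 2" using assms by linarith
  then show ?thesis using assms by cases auto
next
  case False
  have q0: "real q > 0" using assms by simp
  have "real (q + 1) ^ (y - 1) = real q ^ (y - 1) * (1 + 1 / real q) ^ (y - 1)"
    using q0 by (simp add: power_mult_distrib[symmetric] field_simps)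
  also have "(1 + 1 / real q) ^ (y - 1) \<le> exp (1 / real q) ^ (y - 1)"
    by (intro power_mono) (use q0 exp_ge_add_one_self[of "1 / real q"] in auto)
  also have "exp (1 / real q) ^ (y - 1) = exp (real (y - 1) / real q)"
    by (simp add: exp_of_nat_mult[symmetric])
  also have "\<dots> \<le> exp 1" using assms q0 by (simp add: field_simps)
  also have "\<dots> \<le> real y" using exp_le False by linarith
  finally have "real (q + 1) ^ (y - 1) \<le> real q ^ (y - 1) * real y"
    by (simp add: mult_left_mono q0)
  then have "real ((q + 1) ^ (y - 1)) \<le> real (y * q ^ (y - 1))" by (simp add: mult.commute)
  then show ?thesis by (simp only: of_nat_le_iff)
qed

lemma power_pred_le_swap:
  assumes "1 \<le> y" "y \<le> p"
  shows "p ^ (y - 1) \<le> y ^ (p - 1)"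
  using assms(2)
proof (induction p rule: dec_induct)
  case (step q)
  have "Suc q ^ (y - 1) \<le> y * q ^ (y - 1)" using Suc_power_pred_le[OF assms(1) step(1)] by simp
  also have "\<dots> \<le> y * y ^ (q - 1)" using step.IH by simp
  also have "\<dots> = y ^ (Suc q - 1)" using step(1) assms(1) by (cases q) auto
  finally show ?case .
qed simp

lemma alon_furedi_step_bound:
  fixes p k b s N m :: nat
  assumes b: "b < p" "b \<le> k"
    and IH: "p ^ (m * (p - 1)) \<le> s ^ (p - 1) * p ^ (k - b)"
    and N: "(p - b) * s \<le> N"
  shows "p ^ (Suc m * (p - 1)) \<le> N ^ (p - 1) * p ^ k"
proof -
  have "p ^ (Suc m * (p - 1)) = p ^ (p - b - 1) * p ^ b * p ^ (m * (p - 1))"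
    using b by (simp add: power_add[symmetric])
  also have "\<dots> \<le> (p - b) ^ (p - 1) * p ^ b * (s ^ (p - 1) * p ^ (k - b))"
    using power_pred_le_swap[of "p - b" p] b IH by (intro mult_mono) auto
  also have "\<dots> = ((p - b) * s) ^ (p - 1) * p ^ k"
    using b by (simp add: power_mult_distrib ac_simps flip: power_add)
  also have "\<dots> \<le> N ^ (p - 1) * p ^ k"
    using N by (intro mult_right_mono power_mono) auto
  finally show ?thesis .
qed

text \<open>In the induction on m, f vanishes on at most k hyperplanes x m = t; dividing them
  out lowers the degree, and the remaining slices are handled by induction.\<close>

theorem alon_furedi_weak:
  assumes p: "prime p"
  shows "polyfun k f \<Longrightarrow> \<exists>x\<in>vecs p m. \<not> int p dvd f x \<Longrightarrow>
    p ^ (m * (p - 1)) \<le> card {x \<in> vecs p m. \<not> int p dvd f x} ^ (p - 1) * p ^ k"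
proof (induction m arbitrary: k f)
  case 0
  then have "{x \<in> vecs p 0. \<not> int p dvd f x} = {\<lambda>_. 0}" by (auto simp: vecs_0)
  then show ?case using prime_gt_0_nat[OF p] by simp
next
  case (Suc m)
  define S where "S t = {x \<in> vecs p m. \<not> int p dvd f (x(m := t))}" for t
  define B where "B = {t \<in> {..<p}. S t = {}}"
  define A where "A = {..<p} - B"
  have B: "finite B" "B \<subseteq> {..<p}" unfolding B_def by auto
  have "\<forall>x\<in>vecs p (Suc m). x m \<in> B \<longrightarrow> int p dvd f x"
  proof (intro ballI impI)
    fix x assume x: "x \<in> vecs p (Suc m)" "x m \<in> B"
    have "x(m := 0) \<in> vecs p m" using x(1) unfolding vecs_def by auto
    moreover have "S (x m) = {}" using x(2) unfolding B_def by simp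
    ultimately show "int p dvd f x" unfolding S_def by force
  qed
  then obtain q where card_B: "card B \<le> k" and q: "polyfun (k - card B) q"
    and fq: "\<forall>x\<in>vecs p (Suc m). [f x = (\<Prod>t\<in>B. int (x m) - int t) * q x] (mod int p)"
    using polyfun_factor_hyperplanes[OF p Suc.prems(1) B _ Suc.prems(2)] by blast
  have S_A: "S t = {x \<in> vecs p m. \<not> int p dvd q (x(m := t))}" if "t \<in> A" for t
  proof -
    have "x(m := t) \<in> vecs p (Suc m)" if "x \<in> vecs p m" for x
      using that \<open>t \<in> A\<close> unfolding vecs_def A_def by auto
    then show ?thesis
      using dvd_iff_off_hyperplanes[OF p B fq] \<open>t \<in> A\<close> unfolding S_def A_def by auto
  qed
  have IH: "p ^ (m * (p - 1)) \<le> card (S t) ^ (p - 1) * p ^ (k - card B)" if "t \<in> A" for t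
  proof -
    have "S t \<noteq> {}" using that unfolding A_def B_def by auto
    then have "\<exists>x\<in>vecs p m. \<not> int p dvd q (x(m := t))" using S_A[OF that] by auto
    from Suc.IH[OF polyfun_fun_upd[OF q, of m t] this] show ?thesis
      using S_A[OF that] by (simp add: fun_upd_def)
  qed
  obtain x0 where x0: "x0 \<in> vecs p (Suc m)" "\<not> int p dvd f x0" using Suc.prems(2) by blast
  then have "x0(m := 0) \<in> S (x0 m)" "x0 m < p" unfolding S_def vecs_def by auto
  then have "x0 m \<in> A" unfolding A_def B_def by auto
  then obtain t1 where t1: "t1 \<in> A" "\<And>t. t \<in> A \<Longrightarrow> card (S t1) \<le> card (S t)"
    using ex_has_least_nat[of "\<lambda>t. t \<in> A" _ "\<lambda>t. card (S t)"] by blast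
  have card_A: "card A = p - card B" unfolding A_def using B by (simp add: card_Diff_subset)
  moreover have "card A > 0" using \<open>x0 m \<in> A\<close> unfolding A_def by (auto simp: card_gt_0_iff)
  ultimately have "card B < p" by simp
  have "(p - card B) * card (S t1) \<le> (\<Sum>t\<in>A. card (S t))"
    using t1(2) card_A sum_mono[of A "\<lambda>_. card (S t1)" "\<lambda>t. card (S t)"] by simp
  also have "\<dots> \<le> (\<Sum>t<p. card (S t))" unfolding A_def by (intro sum_mono2) auto
  also have "\<dots> = card {x \<in> vecs p (Suc m). \<not> int p dvd f x}"
    unfolding S_def by (rule card_vecs_Suc_Collect[symmetric])
  finally show ?case
    using alon_furedi_step_bound[OF \<open>card B < p\<close> card_B IH[OF t1(1)]] by simp
qed

section \<open>Forms of degree k\<close>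

text \<open>Monomials of degree k in n variables are indexed by the multisets of size k over {..<n}.\<close>

definition monomial_fun :: "nat \<Rightarrow> nat multiset \<Rightarrow> (nat \<Rightarrow> nat) \<Rightarrow> int" where
  "monomial_fun n e v = (\<Prod>i<n. int (v i) ^ count e i)"

definition hom_form :: "nat \<Rightarrow> nat \<Rightarrow> (nat multiset \<Rightarrow> int) \<Rightarrow> (nat \<Rightarrow> nat) \<Rightarrow> int" where
  "hom_form n k c v = (\<Sum>e\<in>multisets_of_size {..<n} k. c e * monomial_fun n e v)"

lemma sum_count_eq_size:
  fixes e :: "nat multiset"
  assumes "set_mset e \<subseteq> {..<n}"
  shows "(\<Sum>i<n. count e i) = size e"
proof -
  have "size e = sum (count e) (set_mset e)" by (rule size_multiset_overloaded_eq)
  also have "\<dots> = (\<Sum>i<n. count e i)"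
    using assms by (intro sum.mono_neutral_left) (auto simp: count_eq_zero_iff)
  finally show ?thesis by simp
qed

lemma polyfun_monomial_fun:
  assumes "e \<in> multisets_of_size {..<n} k"
  shows "polyfun k (monomial_fun n e)"
proof -
  have "polyfun (\<Sum>i<n. count e i * 1) (\<lambda>v. \<Prod>i<n. int (v i) ^ count e i)"
    by (rule polyfun_prod) (use polyfun_power[OF polyfun_coord] in auto)
  moreover have "(\<Sum>i<n. count e i * 1) = k"
    using assms sum_count_eq_size[of e n] by (simp add: multisets_of_size_def)
  ultimately show ?thesis unfolding monomial_fun_def[abs_def] by simp
qed

lemma polyfun_hom_form: "polyfun k (hom_form n k c)"
  unfolding hom_form_def[abs_def]
  by (rule polyfun_sum) (auto intro: polyfun_smult polyfun_monomial_fun)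

lemma monomial_fun_scale:
  assumes "set_mset e \<subseteq> {..<n}"
  shows "monomial_fun n e (\<lambda>i. l * v i) = int l ^ size e * monomial_fun n e v"
proof -
  have "monomial_fun n e (\<lambda>i. l * v i) = (\<Prod>i<n. int l ^ count e i) * monomial_fun n e v"
    unfolding monomial_fun_def by (simp add: power_mult_distrib prod.distrib)
  also have "(\<Prod>i<n. int l ^ count e i) = int l ^ size e"
    using sum_count_eq_size[OF assms] by (simp add: power_sum[symmetric])
  finally show ?thesis .
qed

lemma hom_form_scale: "hom_form n k c (\<lambda>i. l * v i) = int l ^ k * hom_form n k c v"
  unfolding hom_form_def sum_distrib_left
  by (intro sum.cong refl) (auto simp: monomial_fun_scale multisets_of_size_def)

lemma size_eq_imp_count_less:
  fixes e e' :: "'a multiset"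
  assumes "size e = size e'" "e \<noteq> e'"
  shows "\<exists>i. count e i < count e' i"
proof (rule ccontr)
  assume "\<not> ?thesis"
  then have "e' \<subseteq># e" by (simp add: subseteq_mset_def not_less)
  then have "e' \<subset># e" using assms(2) by (simp add: subset_mset.le_neq_trans)
  then show False using mset_subset_size assms(1) by fastforce
qed

lemma sum_vecs_hom_form_mult_monomial:
  "(\<Sum>y\<in>vecs p n. hom_form n k c y * (\<Prod>i<n. int (y i) ^ a i)) =
     (\<Sum>e\<in>multisets_of_size {..<n} k. c e * (\<Prod>i<n. \<Sum>t<p. int t ^ (count e i + a i)))"
proof -
  have "(\<Sum>y\<in>vecs p n. monomial_fun n e y * (\<Prod>i<n. int (y i) ^ a i)) =
      (\<Prod>i<n. \<Sum>t<p. int t ^ (count e i + a i))" for e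
    using sum_vecs_prod[of "\<lambda>i t. int t ^ (count e i + a i)" n p]
    unfolding monomial_fun_def by (simp add: power_add prod.distrib[symmetric])
  then show ?thesis
    unfolding hom_form_def sum_distrib_right
    by (subst sum.swap) (simp add: mult.assoc flip: sum_distrib_left)
qed

text \<open>Weighting by the monomial with exponents p - 1 - count e0 i and summing over the grid
  kills every monomial except e0: the power sum of exponent j over {..<p} is divisible by p for
  j < p - 1 but not for j = p - 1.\<close>

lemma hom_form_nonvanishing:
  assumes p: "prime p" and k: "k \<le> p - 1"
    and e0: "e0 \<in> multisets_of_size {..<n} k" and c0: "\<not> int p dvd c e0"
  shows "\<exists>y\<in>vecs p n. \<not> int p dvd hom_form n k c y"
proof (rule ccontr)
  assume "\<not> ?thesis"
  then have vanish: "\<forall>y\<in>vecs p n. int p dvd hom_form n k c y" by blast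
  define M where "M = multisets_of_size {..<n} k"
  define a where "a i = p - 1 - count e0 i" for i
  define PS where "PS j = (\<Sum>t<p. int t ^ j)" for j
  define T where "T e = c e * (\<Prod>i<n. PS (count e i + a i))" for e
  have pr: "prime (int p)" using p by simp
  have count_e0: "count e0 i \<le> p - 1" for i
    using count_le_size[of e0 i] e0 k by (simp add: multisets_of_size_def)
  have "int p dvd (\<Sum>y\<in>vecs p n. hom_form n k c y * (\<Prod>i<n. int (y i) ^ a i))"
    using vanish by (intro dvd_sum) auto
  also have "(\<Sum>y\<in>vecs p n. hom_form n k c y * (\<Prod>i<n. int (y i) ^ a i)) = (\<Sum>e\<in>M. T e)"
    unfolding sum_vecs_hom_form_mult_monomial M_def T_def PS_def ..
  also have "\<dots> = T e0 + (\<Sum>e\<in>M - {e0}. T e)"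
    using e0 unfolding M_def by (simp add: sum.remove finite_multisets_of_size)
  finally have "int p dvd T e0 + (\<Sum>e\<in>M - {e0}. T e)" .
  moreover have "int p dvd (\<Sum>e\<in>M - {e0}. T e)"
  proof (intro dvd_sum)
    fix e assume e: "e \<in> M - {e0}"
    then obtain i where i: "count e i < count e0 i"
      using size_eq_imp_count_less[of e e0] e0 unfolding M_def multisets_of_size_def by auto
    then have "i \<in># e0" using count_greater_zero_iff[of e0 i] by linarith
    then have "i < n" using e0 by (auto simp: multisets_of_size_def)
    have "int p dvd PS (count e i + a i)"
      unfolding PS_def a_def using prime_dvd_power_sum[OF p] i count_e0[of i] by simp
    then have "int p dvd (\<Prod>i<n. PS (count e i + a i))"
      using \<open>i < n\<close> by (metis dvd_prodI finite_lessThan lessThan_iff dvd_trans)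
    then show "int p dvd T e" unfolding T_def by simp
  qed
  moreover have "\<not> int p dvd T e0"
  proof -
    have "count e0 i + a i = p - 1" for i using count_e0[of i] unfolding a_def by simp
    then have "\<not> int p dvd (\<Prod>i<n. PS (count e0 i + a i))"
      using prime_not_dvd_power_sum_pred[OF p] by (auto simp: PS_def dest: prime_dvd_power[OF pr])
    then show ?thesis using c0 pr unfolding T_def by (simp add: prime_dvd_mult_iff)
  qed
  ultimately show False by (simp add: dvd_add_left_iff)
qed

lemma hom_form_vanishing_on_small_set:
  assumes p: "prime p" and D: "finite D"
    and card_D: "card D < card (multisets_of_size {..<n} k)"
  shows "\<exists>c e0. e0 \<in> multisets_of_size {..<n} k \<and> \<not> int p dvd c e0 \<and>
     (\<forall>d\<in>D. int p dvd hom_form n k c d)"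
proof -
  define M where "M = multisets_of_size {..<n} k"
  define C where "C = PiE M (\<lambda>_. {..<p})"
  define ev where "ev c = restrict (\<lambda>d. hom_form n k (\<lambda>e. int (c e)) d mod int p) D" for c
  have p1: "p > 1" using prime_gt_1_nat[OF p] .
  have finM: "finite M" unfolding M_def by (simp add: finite_multisets_of_size)
  have "\<not> inj_on ev C"
  proof
    assume "inj_on ev C"
    moreover have "ev ` C \<subseteq> PiE D (\<lambda>_. {0..<int p})"
      unfolding ev_def using p1 by auto
    ultimately have "card C \<le> card (PiE D (\<lambda>_. {0..<int p}))"
      by (intro card_inj_on_le) (auto intro: finite_PiE D)
    then have "p ^ card M \<le> p ^ card D" using finM D by (simp add: C_def card_PiE)
    then show False using power_le_imp_le_exp[OF p1] card_D unfolding M_def by fastforce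
  qed
  then obtain c1 c2 where c: "c1 \<in> C" "c2 \<in> C" "c1 \<noteq> c2" "ev c1 = ev c2"
    unfolding inj_on_def by blast
  then obtain e0 where e0: "e0 \<in> M" "c1 e0 \<noteq> c2 e0"
    unfolding C_def by (meson PiE_ext)
  define c where "c e = int (c1 e) - int (c2 e)" for e
  have "c1 e0 < p" "c2 e0 < p" using c(1,2) e0(1) unfolding C_def by auto
  then have "\<not> int p dvd c e0" unfolding c_def using int_dvd_diff_less_imp_eq e0(2) by blast
  moreover have "int p dvd hom_form n k c d" if d: "d \<in> D" for d
  proof -
    have "[hom_form n k (\<lambda>e. int (c1 e)) d = hom_form n k (\<lambda>e. int (c2 e)) d] (mod int p)"
      using fun_cong[OF c(4), of d] d unfolding ev_def cong_def by simp
    moreover have "hom_form n k (\<lambda>e. int (c1 e)) d - hom_form n k (\<lambda>e. int (c2 e)) d = hom_form n k c d"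
      unfolding hom_form_def c_def by (simp add: sum_subtractf[symmetric] left_diff_distrib)
    ultimately show ?thesis by (simp add: cong_iff_dvd_diff dvd_diff_commute)
  qed
  ultimately show ?thesis using e0(1) unfolding M_def by blast
qed

lemma ex_hom_form_vanishing_on_not_on_grid:
  assumes p: "prime p" and D: "D \<subseteq> vecs p n" and card_D: "card D < (n + p - 2) choose (p - 1)"
  shows "\<exists>c d0. d0 \<in> vecs p n \<and> \<not> int p dvd hom_form n (p - 1) c d0 \<and>
    (\<forall>d\<in>D. int p dvd hom_form n (p - 1) c d)"
proof -
  have "card (multisets_of_size {..<n} (p - 1)) = (n + p - 2) choose (p - 1)"
    using prime_gt_1_nat[OF p] by (simp add: card_multisets_of_size numeral_2_eq_2)
  then have "card D < card (multisets_of_size {..<n} (p - 1))" using card_D by simp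
  then obtain c e0 where "e0 \<in> multisets_of_size {..<n} (p - 1)" "\<not> int p dvd c e0"
    and "\<forall>d\<in>D. int p dvd hom_form n (p - 1) c d"
    using hom_form_vanishing_on_small_set[OF p finite_subset[OF D vecs_finite]] by blast
  then show ?thesis using hom_form_nonvanishing[of p "p - 1" e0 n c] p by blast
qed

section \<open>The rectangle cut out by a polynomial\<close>

definition root_rect :: "nat \<Rightarrow> nat \<Rightarrow> ((nat \<Rightarrow> nat) \<Rightarrow> int) \<Rightarrow> nat \<Rightarrow> (nat \<Rightarrow> nat) set" where
  "root_rect p n P =
     (\<lambda>i. if i = 1 then {y \<in> vecs p n. \<not> int p dvd P y} else {y \<in> vecs p n. int p dvd P y})"

lemma rect_contains_root_rect_iff:
  assumes P: "polyfun k P" and x: "x \<in> vecs p n" and d: "d \<in> vecs p n" and p: "0 < p"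
  shows "rect_contains p (root_rect p n P) x d \<longleftrightarrow>
    \<not> int p dvd P x \<and> (\<forall>l\<in>{1..<p}. int p dvd P (\<lambda>i. x i + l * d i))"
proof -
  have dvd_iff: "int p dvd P (line_pt p x d l) \<longleftrightarrow> int p dvd P (\<lambda>i. x i + l * d i)" for l
    by (rule cong_dvd_iff, rule polyfun_cong[OF P]) (simp add: line_pt_def cong_def)
  have "line_pt p x d 0 = x"
  proof
    fix i show "line_pt p x d 0 i = x i" using x p unfolding line_pt_def vecs_def by (cases "i < n") auto
  qed
  then have "rect_contains p (root_rect p n P) x d \<longleftrightarrow>
      \<not> int p dvd P x \<and> (\<forall>l\<in>{1..<p}. int p dvd P (line_pt p x d l))"
    using line_pt_in_vecs[OF x d p] p unfolding rect_contains_def root_rect_def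
    by (auto simp: less_Suc_eq_0_disj Ball_def) (metis)
  then show ?thesis using dvd_iff by simp
qed

text \<open>Along a line of the rectangle only the first point is a nonzero of P, so the sum of P
  along it is P x modulo p; along the parallel line through the origin the sum is
  g d * (sum of l^(p-1)) - p * a.\<close>

lemma root_rect_no_line_of_hom:
  assumes p: "prime p" and g: "polyfun (p - 1) g"
    and hom: "\<And>l v. g (\<lambda>i. l * v i) = int l ^ (p - 1) * g v"
    and x: "x \<in> vecs p n" and d: "d \<in> vecs p n" and gd: "int p dvd g d"
  shows "\<not> rect_contains p (root_rect p n (\<lambda>v. g v - a)) x d"
proof
  define P where "P v = g v - a" for v
  have P: "polyfun (p - 1) P" unfolding P_def[abs_def] by (rule polyfun_diff[OF g polyfun_const])
  assume "rect_contains p (root_rect p n (\<lambda>v. g v - a)) x d"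
  then have Px: "\<not> int p dvd P x" and Pl: "\<forall>l\<in>{1..<p}. int p dvd P (\<lambda>i. x i + l * d i)"
    using rect_contains_root_rect_iff[OF P x d prime_gt_0_nat[OF p]] unfolding P_def by auto
  have "(\<Sum>l<p. P (\<lambda>i. x i + l * d i)) = P x + (\<Sum>l\<in>{1..<p}. P (\<lambda>i. x i + l * d i))"
    using prime_gt_0_nat[OF p] by (simp add: atLeast0LessThan[symmetric] sum.atLeast_Suc_lessThan)
  moreover have "int p dvd (\<Sum>l\<in>{1..<p}. P (\<lambda>i. x i + l * d i))"
    using Pl by (intro dvd_sum) auto
  moreover have "int p dvd (\<Sum>l<p. P (\<lambda>i. x i + l * d i))"
  proof -
    have "(\<Sum>l<p. P (\<lambda>i. l * d i)) = g d * (\<Sum>l<p. int l ^ (p - 1)) - int p * a"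
      unfolding P_def hom by (simp add: sum_subtractf sum_distrib_left mult.commute)
    then have "int p dvd (\<Sum>l<p. P (\<lambda>i. l * d i))" using gd by simp
    then show ?thesis using cong_dvd_iff[OF polyfun_line_sum_cong[OF p P]] by blast
  qed
  ultimately show False using Px by (simp add: dvd_add_left_iff)
qed

lemma root_rect_contains_line_of_hom:
  assumes p: "prime p" and g: "polyfun k g"
    and hom: "\<And>l v. g (\<lambda>i. l * v i) = int l ^ (p - 1) * g v"
    and d: "d \<in> vecs p n" and gd: "\<not> int p dvd g d"
  shows "rect_contains p (root_rect p n (\<lambda>v. g v - g d)) (\<lambda>_. 0) d"
proof -
  have p1: "p > 1" using prime_gt_1_nat[OF p] .
  have "g (\<lambda>_. 0) = 0" using hom[of 0 d] p1 by simp
  moreover have "int p dvd g (\<lambda>i. l * d i) - g d" if "l \<in> {1..<p}" for l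
  proof -
    have "\<not> int p dvd int l" using that by (auto dest: zdvd_imp_le)
    then have "int p dvd (int l ^ (p - 1) - 1) * g d" using fermat_theorem_int[OF p] by simp
    then show ?thesis unfolding hom by (simp add: left_diff_distrib)
  qed
  ultimately show ?thesis
    using rect_contains_root_rect_iff[OF polyfun_diff[OF g polyfun_const] zero_in_vecs d] p1 gd
    by simp
qed

lemma power_diff_le_of_power_mult_le:
  fixes p N q a b :: nat
  assumes "0 < p" "0 < q" "0 < N" and le: "p ^ (a * q) \<le> N ^ q * p ^ (b * q)"
  shows "p ^ (a - b) \<le> N"
proof (cases "a \<le> b")
  case False
  then have "(p ^ (a - b)) ^ q * p ^ (b * q) = p ^ (a * q)"
    by (simp add: power_mult[symmetric] power_add[symmetric] add_mult_distrib[symmetric])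
  then have "(p ^ (a - b)) ^ q \<le> N ^ q"
    using le assms(1) by (metis mult_right_le_imp_le zero_less_power)
  then show ?thesis using assms(2) power_le_imp_le_base[of _ "q - 1"] by simp
qed (use assms in simp)

definition line_indicator :: "nat \<Rightarrow> ((nat \<Rightarrow> nat) \<Rightarrow> int) \<Rightarrow> (nat \<Rightarrow> nat) \<Rightarrow> (nat \<Rightarrow> nat) \<Rightarrow> int" where
  "line_indicator p P x d = P x ^ (p - 1) * (\<Prod>l\<in>{1..<p}. 1 - P (\<lambda>i. x i + l * d i) ^ (p - 1))"

lemma not_dvd_line_indicator_iff:
  assumes p: "prime p" and P: "polyfun k P" and x: "x \<in> vecs p n" and d: "d \<in> vecs p n"
  shows "\<not> int p dvd line_indicator p P x d \<longleftrightarrow> rect_contains p (root_rect p n P) x d"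
proof -
  have pr: "prime (int p)" using p by simp
  show ?thesis
    using rect_contains_root_rect_iff[OF P x d prime_gt_0_nat[OF p]] prime_gt_1_nat[OF p]
      prime_dvd_one_minus_power_pred_iff[OF p]
    unfolding line_indicator_def
    by (auto simp: prime_dvd_mult_iff[OF pr] prime_dvd_prod_iff[OF _ pr] prime_dvd_power_iff[OF pr])
qed

lemma polyfun_line_indicator_vec_fst_snd:
  assumes P: "polyfun k P"
  shows "polyfun (p * k * (p - 1)) (\<lambda>u. line_indicator p P (vec_fst n u) (vec_snd n u))"
proof -
  define Q where "Q l u = P (\<lambda>i. vec_fst n u i + l * vec_snd n u i)" for l u
  have "polyfun k (Q l)" for l
    unfolding Q_def[abs_def]
  proof (rule polyfun_compose[OF P])
    show "polyfun 1 (\<lambda>u. int (vec_fst n u i + l * vec_snd n u i))" for i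
    proof (cases "i < n")
      case True
      have "polyfun 1 (\<lambda>u. int (u i) + int l * int (u (n + i)))"
        by (intro polyfun_add polyfun_smult polyfun_coord)
      then show ?thesis using True unfolding vec_fst_def vec_snd_def by simp
    qed (simp add: vec_fst_def vec_snd_def polyfun_const)
  qed
  then have Q_pow: "polyfun ((p - 1) * k) (\<lambda>u. Q l u ^ (p - 1))" for l
    by (rule polyfun_power)
  have "polyfun (\<Sum>l\<in>{1..<p}. (p - 1) * k) (\<lambda>u. \<Prod>l\<in>{1..<p}. 1 - Q l u ^ (p - 1))"
    by (intro polyfun_prod finite_atLeastLessThan polyfun_diff[OF polyfun_const Q_pow])
  from polyfun_mult[OF Q_pow[of 0] this]
  have "polyfun ((p - 1) * k + (\<Sum>l\<in>{1..<p}. (p - 1) * k))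
      (\<lambda>u. line_indicator p P (vec_fst n u) (vec_snd n u))"
    unfolding line_indicator_def Q_def by simp
  moreover have "(p - 1) * k + (\<Sum>l\<in>{1..<p}. (p - 1) * k) = p * k * (p - 1)"
    by (cases p) (simp_all add: algebra_simps)
  ultimately show ?thesis by simp
qed

lemma num_lines_root_rect_ge:
  assumes p: "prime p" and P: "polyfun k P"
    and x0: "x0 \<in> vecs p n" and d0: "d0 \<in> vecs p n"
    and line: "rect_contains p (root_rect p n P) x0 d0"
  shows "p ^ (2 * n - p * k) \<le> num_lines p n (root_rect p n P)"
proof -
  define L where "L = {(x, d). x \<in> vecs p n \<and> d \<in> vecs p n \<and> rect_contains p (root_rect p n P) x d}"
  define S where "S = {u \<in> vecs p (2 * n). \<not> int p dvd line_indicator p P (vec_fst n u) (vec_snd n u)}"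
  let ?pair = "\<lambda>u. (vec_fst n u, vec_snd n u)"
  have bij: "bij_betw ?pair (vecs p (2 * n)) (vecs p n \<times> vecs p n)"
    by (rule bij_betw_vec_fst_snd)
  have "?pair ` S = L"
  proof (intro equalityI subsetI)
    fix z assume "z \<in> ?pair ` S"
    then show "z \<in> L"
      unfolding S_def L_def using bij_betw_apply[OF bij] not_dvd_line_indicator_iff[OF p P] by fastforce
  next
    fix z assume "z \<in> L"
    then obtain x d where z: "z = (x, d)" "x \<in> vecs p n" "d \<in> vecs p n"
      "rect_contains p (root_rect p n P) x d" unfolding L_def by auto
    then obtain u where "u \<in> vecs p (2 * n)" "(x, d) = ?pair u"
      using bij_betw_imp_surj_on[OF bij] by blast
    then show "z \<in> ?pair ` S" unfolding S_def using not_dvd_line_indicator_iff[OF p P] z by auto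
  qed
  moreover have "inj_on ?pair S"
    using bij_betw_imp_inj_on[OF bij] unfolding S_def by (rule inj_on_subset) auto
  ultimately have card_S: "card S = num_lines p n (root_rect p n P)"
    unfolding num_lines_def L_def by (metis card_image)
  have "S \<noteq> {}" using \<open>?pair ` S = L\<close> x0 d0 line unfolding L_def by auto
  then have "p ^ (2 * n * (p - 1)) \<le> card S ^ (p - 1) * p ^ (p * k * (p - 1))"
    using alon_furedi_weak[OF p polyfun_line_indicator_vec_fst_snd[OF P]] unfolding S_def by auto
  moreover have "0 < card S"
    using \<open>S \<noteq> {}\<close> unfolding S_def by (simp add: card_gt_0_iff vecs_finite)
  ultimately have "p ^ (2 * n - p * k) \<le> card S"
    using prime_gt_1_nat[OF p] by (intro power_diff_le_of_power_mult_le) auto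
  then show ?thesis unfolding card_S .
qed

theorem theorem3p3:
  fixes p n :: nat and D :: "(nat \<Rightarrow> nat) set"
  assumes "prime p"
    and "p ^ 2 \<le> n"
    and "D \<subseteq> vecs p n"
    and "card D < (n + p - 2) choose (p - 1)"
  shows "\<exists>T1 T2. T1 \<subseteq> vecs p n \<and> T2 \<subseteq> vecs p n \<and> T1 \<inter> T2 = {} \<and>
           num_lines p n (\<lambda>i. if i = 1 then T1 else T2) \<ge> p ^ (2 * n + p - p ^ 2) \<and>
           (\<forall>x \<in> vecs p n. \<forall>d \<in> D. \<not> rect_contains p (\<lambda>i. if i = 1 then T1 else T2) x d)"
proof -
  note p = assms(1)
  obtain c d0 where d0: "d0 \<in> vecs p n" "\<not> int p dvd hom_form n (p - 1) c d0"
    and c_D: "\<forall>d\<in>D. int p dvd hom_form n (p - 1) c d"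
    using ex_hom_form_vanishing_on_not_on_grid[OF p assms(3,4)] by blast
  define g where "g = hom_form n (p - 1) c"
  define P where "P v = g v - g d0" for v
  have g: "polyfun (p - 1) g" and hom: "\<And>l v. g (\<lambda>i. l * v i) = int l ^ (p - 1) * g v"
    unfolding g_def by (simp_all add: polyfun_hom_form hom_form_scale)
  have "rect_contains p (root_rect p n P) (\<lambda>_. 0) d0"
    unfolding P_def using root_rect_contains_line_of_hom[OF p g hom d0(1)] d0(2) g_def by simp
  from num_lines_root_rect_ge[OF p polyfun_diff[OF g polyfun_const]
      zero_in_vecs[OF prime_gt_0_nat[OF p]] d0(1) this[unfolded P_def]]
  have "p ^ (2 * n - p * (p - 1)) \<le> num_lines p n (root_rect p n P)"
    unfolding P_def .
  moreover have "2 * n - p * (p - 1) = 2 * n + p - p ^ 2"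
    using assms(2) by (simp add: power2_eq_square diff_mult_distrib2)
  moreover have "\<forall>x\<in>vecs p n. \<forall>d\<in>D. \<not> rect_contains p (root_rect p n P) x d"
    unfolding P_def using root_rect_no_line_of_hom[OF p g hom] c_D assms(3) g_def by blast
  ultimately show ?thesis unfolding root_rect_def
    by (intro exI[of _ "{y \<in> vecs p n. \<not> int p dvd P y}"] exI[of _ "{y \<in> vecs p n. int p dvd P y}"])
      auto
qed

end
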